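(* Let $E\subseteq\mathbb R^2$ be a bounded domain. For every $U\subseteq E$ satisfying $|U|\ge|E|(1-\frac{A(E)}4)$ we have $A(U)\ge\frac{A(E)}4$.
   Context: For a bounded set $E\subseteq\mathbb R^2$ of positive measure, the Fraenkel asymmetry is $A(E)=\inf\{|E\triangle(x_0+rB)|/|E|: x_0\in\mathbb R^2,\ \pi r^2=|E|\}\in[0,1]$, where $B$ is the unit disk and $\triangle$ denotes symmetric difference. *)

theory Defs
  imports "HOL-Analysis.Analysis"
begin

abbreviation area :: "(real^2) set \<Rightarrow> real" where
  "area E \<equiv> measure lebesgue E"

definition fraenkel_asymmetry :: "(real^2) set \<Rightarrow> real" where
  "fraenkel_asymmetry E =
     Inf {area ((E - ((\<lambda>y. x0 + r *\<^sub>R y) ` ball 0 1)) \<union> (((\<lambda>y. x0 + r *\<^sub>R y) ` ball 0 1) - E)) / area E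
          | x0 r. r > 0 \<and> pi * r\<^sup>2 = area E}"

end

theory Submission
  imports Defs
begin

text \<open>Take any disc \<open>B'\<close> with \<open>|B'| = |U|\<close> and let \<open>B \<supseteq> B'\<close> be the concentric disc with
  \<open>|B| = |E|\<close>. Since \<open>E \<triangle> B \<subseteq> (E - U) \<union> (U \<triangle> B') \<union> (B - B')\<close>, we get
  \<open>A(E)|E| \<le> |E \<triangle> B| \<le> 2(|E| - |U|) + |U \<triangle> B'| \<le> A(E)|E|/2 + |U \<triangle> B'|\<close>, hence
  \<open>|U \<triangle> B'| \<ge> A(E)|E|/2 \<ge> A(E)|U|/4\<close>. The hypothesis also forces \<open>|U| > 0\<close>, because \<open>A(E) \<le> 2\<close>.\<close>

lemma affine_image_unit_ball:
  fixes x0 :: "'a::real_normed_vector"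
  assumes "r > 0"
  shows "(\<lambda>y. x0 + r *\<^sub>R y) ` ball 0 1 = ball x0 r"
proof -
  have "(\<lambda>y. x0 + r *\<^sub>R y) ` ball 0 1 = (+) x0 ` (\<lambda>y. r *\<^sub>R y) ` ball 0 1"
    by (simp add: image_image)
  also have "\<dots> = ball x0 r"
    using assms by (subst ball_scale) auto
  finally show ?thesis .
qed

lemma area_ball: "r \<ge> 0 \<Longrightarrow> area (ball x r) = pi * r\<^sup>2"
  using circle_area[of r x] by simp

lemma measure_lebesgue_open_pos:
  fixes E :: "'a::euclidean_space set"
  assumes "open E" "E \<noteq> {}" "bounded E"
  shows "measure lebesgue E > 0"
proof -
  obtain x e where "e > 0" "ball x e \<subseteq> E"
    using assms by (metis all_not_in_conv open_contains_ball)
  then have "measure lebesgue (ball x e) \<le> measure lebesgue E"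
    using assms by (intro measure_mono_fmeasurable) (auto simp: lmeasurable_open)
  moreover have "measure lebesgue (ball x e) = measure lborel (ball x e)"
    by (simp add: measure_completion)
  ultimately show ?thesis
    using content_ball_pos[of e x] \<open>e > 0\<close> by linarith
qed

lemma measure_sym_diff_le_nested:
  assumes "U \<subseteq> E" "B' \<subseteq> B"
    and "E \<in> fmeasurable M" "U \<in> sets M" "B \<in> fmeasurable M" "B' \<in> sets M"
  shows "measure M (sym_diff E B)
    \<le> (measure M E - measure M U) + measure M (sym_diff U B') + (measure M B - measure M B')"
proof -
  have sets: "E \<in> sets M" "B \<in> sets M"
    using assms by (auto dest: fmeasurableD)
  have "sym_diff E B \<subseteq> (E - U) \<union> sym_diff U B' \<union> (B - B')"
    using assms(1,2) by auto
  moreover have "(E - U) \<union> sym_diff U B' \<union> (B - B') \<in> fmeasurable M"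
    using assms by (intro fmeasurable.Un fmeasurable_Diff) (auto intro: fmeasurableI2[of "E \<union> B"])
  ultimately have "measure M (sym_diff E B) \<le> measure M ((E - U) \<union> sym_diff U B' \<union> (B - B'))"
    using assms sets by (intro measure_mono_fmeasurable) auto
  also have "\<dots> \<le> measure M (E - U) + measure M (sym_diff U B') + measure M (B - B')"
    using assms sets measure_Un_le[of "E - U" M "sym_diff U B'"]
      measure_Un_le[of "(E - U) \<union> sym_diff U B'" M "B - B'"]
    by auto
  also have "measure M (E - U) = measure M E - measure M U"
    using assms by (intro measurable_measure_Diff)
  also have "measure M (B - B') = measure M B - measure M B'"
    using assms by (intro measurable_measure_Diff)
  finally show ?thesis .
qed

lemma fraenkel_asymmetry_eq_Inf:
  "fraenkel_asymmetry E =
     Inf {area (sym_diff E (ball x0 r)) / area E | x0 r. r > 0 \<and> pi * r\<^sup>2 = area E}"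
  unfolding fraenkel_asymmetry_def
  by (intro arg_cong[where f = Inf] Collect_cong ex_cong1) (auto simp: affine_image_unit_ball)

lemma disc_of_area_exists: "a > 0 \<Longrightarrow> \<exists>r > 0. pi * r\<^sup>2 = a"
  by (rule exI[of _ "sqrt (a / pi)"]) simp

lemma fraenkel_asymmetry_le:
  assumes "r > 0" "pi * r\<^sup>2 = area E"
  shows "fraenkel_asymmetry E \<le> area (sym_diff E (ball x0 r)) / area E"
  unfolding fraenkel_asymmetry_eq_Inf
proof (rule cInf_lower)
  show "bdd_below {area (sym_diff E (ball x0 r)) / area E | x0 r. r > 0 \<and> pi * r\<^sup>2 = area E}"
    by (rule bdd_belowI[of _ 0]) auto
qed (use assms in blast)

lemma fraenkel_asymmetry_ge:
  assumes "area E > 0"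
    and "\<And>x0 r. r > 0 \<Longrightarrow> pi * r\<^sup>2 = area E \<Longrightarrow> c \<le> area (sym_diff E (ball x0 r)) / area E"
  shows "c \<le> fraenkel_asymmetry E"
  unfolding fraenkel_asymmetry_eq_Inf
  using disc_of_area_exists[OF assms(1)] assms(2) by (intro cInf_greatest) auto

lemma fraenkel_asymmetry_nonneg: "area E > 0 \<Longrightarrow> 0 \<le> fraenkel_asymmetry E"
  by (rule fraenkel_asymmetry_ge) auto

lemma fraenkel_asymmetry_le_2:
  assumes "E \<in> lmeasurable" "area E > 0"
  shows "fraenkel_asymmetry E \<le> 2"
proof -
  obtain r where r: "r > 0" "pi * r\<^sup>2 = area E"
    using disc_of_area_exists[OF assms(2)] by blast
  have sets: "E \<in> sets lebesgue" "ball 0 r \<in> sets lebesgue"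
    using assms(1) by (auto dest: fmeasurableD)
  then have "area (sym_diff E (ball 0 r)) \<le> area (E \<union> ball 0 r)"
    using assms(1) by (intro measure_mono_fmeasurable sets.Un sets.Diff fmeasurable.Un) auto
  also have "\<dots> \<le> area E + area (ball 0 r)"
    using sets by (rule measure_Un_le)
  also have "area (ball 0 r) = area E"
    using r area_ball[of r 0] by simp
  finally have "area (sym_diff E (ball 0 r)) / area E \<le> 2"
    using assms(2) by (simp add: pos_divide_le_eq)
  with fraenkel_asymmetry_le[OF r, of 0] show ?thesis
    by linarith
qed

lemma area_sym_diff_ball_le_subset:
  assumes "U \<subseteq> E" "E \<in> lmeasurable" "U \<in> sets lebesgue"
    and "r > 0" "pi * r\<^sup>2 = area E" "s > 0" "pi * s\<^sup>2 = area U"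
  shows "area (sym_diff E (ball x0 r)) \<le> 2 * (area E - area U) + area (sym_diff U (ball x0 s))"
proof -
  have "pi * s\<^sup>2 \<le> pi * r\<^sup>2"
    using measure_mono_fmeasurable[OF assms(1,3,2)] assms(5,7) by simp
  then have "s\<^sup>2 \<le> r\<^sup>2"
    by simp
  then have "s \<le> r"
    by (rule power2_le_imp_le) (use assms(4) in linarith)
  then have "ball x0 s \<subseteq> ball x0 r"
    by auto
  from measure_sym_diff_le_nested[OF assms(1) this assms(2,3)]
  have "area (sym_diff E (ball x0 r))
      \<le> (area E - area U) + area (sym_diff U (ball x0 s)) + (area (ball x0 r) - area (ball x0 s))"
    by simp
  also have "area (ball x0 r) - area (ball x0 s) = area E - area U"
    using assms(4-7) area_ball[of r x0] area_ball[of s x0] by simp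
  finally show ?thesis
    by simp
qed

theorem lemma4p4:
  fixes E U :: "(real^2) set"
  assumes "open E" and "connected E" and "E \<noteq> {}" and "bounded E"
    and "U \<subseteq> E" and "U \<in> sets lebesgue"
    and "area U \<ge> area E * (1 - fraenkel_asymmetry E / 4)"
  shows "fraenkel_asymmetry U \<ge> fraenkel_asymmetry E / 4"
proof -
  define A where "A = fraenkel_asymmetry E"
  have E: "E \<in> lmeasurable" "area E > 0"
    using lmeasurable_open[OF assms(4,1)] measure_lebesgue_open_pos[OF assms(1,3,4)] by auto
  have U_le_E: "area U \<le> area E"
    using assms(5,6) E(1) by (rule measure_mono_fmeasurable)
  have A: "0 \<le> A" "A \<le> 2"
    unfolding A_def using fraenkel_asymmetry_nonneg fraenkel_asymmetry_le_2 E by auto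
  have deficit: "area E - area U \<le> A * area E / 4"
    using assms(7) by (simp add: A_def algebra_simps)
  moreover have "A * area E \<le> 2 * area E"
    using A E by (intro mult_right_mono) auto
  ultimately have U_pos: "area U > 0"
    using E by linarith
  obtain r where r: "r > 0" "pi * r\<^sup>2 = area E"
    using disc_of_area_exists[OF \<open>area E > 0\<close>] by blast
  show ?thesis
    unfolding A_def[symmetric]
  proof (rule fraenkel_asymmetry_ge[OF U_pos])
    fix x0 s assume s: "s > 0" "pi * s\<^sup>2 = area U"
    have "A * area E \<le> area (sym_diff E (ball x0 r))"
      using fraenkel_asymmetry_le[OF r, of x0] E by (simp add: A_def pos_le_divide_eq)
    also have "\<dots> \<le> 2 * (area E - area U) + area (sym_diff U (ball x0 s))"
      using assms(5) E(1) assms(6) r s by (rule area_sym_diff_ball_le_subset)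
    finally have "A * area U / 4 \<le> area (sym_diff U (ball x0 s))"
      using deficit mult_left_mono[OF U_le_E A(1)] mult_nonneg_nonneg[OF A(1) less_imp_le[OF U_pos]]
      by argo
    then show "A / 4 \<le> area (sym_diff U (ball x0 s)) / area U"
      using U_pos by (simp add: pos_le_divide_eq)
  qed
qed

end
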